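(* Let $\alpha,\beta$ be real numbers with $\beta\le\alpha<1$ and $\alpha>0$. Then the $\beta$-Ces\`aro operator $C_\beta$ maps $\mathcal{B}_\alpha^0$ into $\mathcal{B}_\alpha^0$ and is a bounded linear operator from $(\mathcal{B}_\alpha^0,\|\cdot\|_{\mathcal{B}_\alpha})$ to itself.
   Context: $\mathbb{D}=\{z\in\mathbb{C}:|z|<1\}$. For $\alpha>0$, the $\alpha$-Bloch space $\mathcal{B}_\alpha$ is the space of analytic functions $f$ on $\mathbb{D}$ with $\|f\|_{\mathcal{B}_\alpha}:=\sup_{z\in\mathbb{D}}(1-|z|^2)^\alpha|f'(z)|<\infty$. $\mathcal{B}_\alpha^0=\{f\in\mathcal{B}_\alpha: f(0)=0\}$, normed by $\|\cdot\|_{\mathcal{B}_\alpha}$. For $\beta\in\mathbb{R}$, the $\beta$-Ces\`aro operator is $C_\beta(f)(z)=\int_0^z \frac{f(w)}{w(1-w)^\beta}\,dw$ for analytic $f$ on $\mathbb{D}$ with $f(0)=0$, where $(1-w)^{\beta}$ is defined by the principal branch. *)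

theory Defs
  imports "HOL-Complex_Analysis.Complex_Analysis"
begin

definition bloch_norm :: "real \<Rightarrow> (complex \<Rightarrow> complex) \<Rightarrow> real" where
  "bloch_norm \<alpha> f = (SUP z\<in>ball 0 1. (1 - (cmod z)^2) powr \<alpha> * cmod (deriv f z))"

definition bloch :: "real \<Rightarrow> (complex \<Rightarrow> complex) set" where
  "bloch \<alpha> = {f. f holomorphic_on ball 0 1 \<and>
      bdd_above ((\<lambda>z. (1 - (cmod z)^2) powr \<alpha> * cmod (deriv f z)) ` ball 0 1)}"

definition bloch0 :: "real \<Rightarrow> (complex \<Rightarrow> complex) set" where
  "bloch0 \<alpha> = {f \<in> bloch \<alpha>. f 0 = 0}"

text \<open>beta-Cesaro operator: integral from 0 to z along the segment; powr on complex
  numbers is the principal branch.\<close>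
definition cesaro :: "real \<Rightarrow> (complex \<Rightarrow> complex) \<Rightarrow> complex \<Rightarrow> complex" where
  "cesaro \<beta> f z = contour_integral (linepath 0 z)
      (\<lambda>w. f w / (w * (1 - w) powr complex_of_real \<beta>))"

end

theory Submission
  imports Defs
begin

text \<open>
  Off the origin, \<open>(C\<^sub>\<beta> f)'(z) = f(z) / (z (1 - z)\<^sup>\<beta>)\<close>. Integrating the Bloch bound
  \<open>|f'(w)| \<le> \<parallel>f\<parallel> (1 - |w|)\<^sup>-\<^sup>\<alpha>\<close> along the radius gives \<open>|f(z)| \<le> \<parallel>f\<parallel> |z| / (1 - \<alpha>)\<close>,
  which is where \<open>\<alpha> < 1\<close> enters. Since \<open>1 - |z|\<^sup>2 \<le> 2 |1 - z|\<close>, \<open>|1 - z| \<le> 2\<close> and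
  \<open>\<beta> \<le> \<alpha>\<close>, the remaining weight satisfies \<open>(1 - |z|\<^sup>2)\<^sup>\<alpha> / |1 - z|\<^sup>\<beta> \<le> 2\<^sup>2\<^sup>\<alpha>\<^sup>-\<^sup>\<beta>\<close>,
  so \<open>\<parallel>C\<^sub>\<beta> f\<parallel> \<le> 2\<^sup>2\<^sup>\<alpha>\<^sup>-\<^sup>\<beta> / (1 - \<alpha>) \<parallel>f\<parallel>\<close>.
\<close>

lemma holomorphic_convex_linepath_primitive:
  assumes hol: "f holomorphic_on S" and "convex S" "open S" "a \<in> S" "x \<in> S"
  shows "((\<lambda>x. contour_integral (linepath a x) f) has_field_derivative f x) (at x)"
proof -
  have "contour_integral (linepath a b) f + contour_integral (linepath b c) f
          + contour_integral (linepath c a) f = 0" if "b \<in> S" "c \<in> S" for b c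
  proof (rule has_chain_integral_chain_integral3)
    have "convex hull {a, b, c} \<subseteq> S"
      using assms that by (intro hull_minimal) auto
    then show "(f has_contour_integral 0) (linepath a b +++ linepath b c +++ linepath c a)"
      using hol by (intro Cauchy_theorem_triangle) (rule holomorphic_on_subset)
  qed
  then have "((\<lambda>x. contour_integral (linepath a x) f) has_field_derivative f x) (at x within S)"
    using assms holomorphic_on_imp_continuous_on
    by (intro triangle_contour_integrals_convex_primitive) auto
  then show ?thesis
    by (simp add: at_within_open[OF \<open>x \<in> S\<close> \<open>open S\<close>])
qed

lemma has_contour_integral_linepath_spike_start:
  assumes "\<And>w. w \<noteq> a \<Longrightarrow> F w = H w"
  shows "(F has_contour_integral i) (linepath a b) \<longleftrightarrow> (H has_contour_integral i) (linepath a b)"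
  unfolding has_contour_integral_linepath
proof (rule has_integral_spike_finite_eq[of "{0}"])
  fix t :: real
  assume t: "t \<in> {0..1} - {0}"
  show "H (linepath a b t) * (b - a) = F (linepath a b t) * (b - a)"
  proof (cases "a = b")
    case False
    then have "linepath a b t \<noteq> a"
      using t by (auto simp: linepath_def algebra_simps)
    then show ?thesis
      using assms by simp
  qed simp
qed simp

lemma one_minus_notin_nonpos_Reals:
  fixes w :: complex
  assumes "w \<in> ball 0 1"
  shows "1 - w \<notin> \<real>\<^sub>\<le>\<^sub>0"
  using assms complex_Re_le_cmod[of w] by (auto simp: complex_nonpos_Reals_iff)

definition slope0 :: "(complex \<Rightarrow> complex) \<Rightarrow> complex \<Rightarrow> complex" where
  "slope0 f w = (if w = 0 then deriv f 0 else f w / w)"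

definition cesaro_integrand :: "real \<Rightarrow> (complex \<Rightarrow> complex) \<Rightarrow> complex \<Rightarrow> complex" where
  "cesaro_integrand \<beta> f w = slope0 f w / (1 - w) powr complex_of_real \<beta>"

lemma slope0_holomorphic:
  assumes "f holomorphic_on S" "open S" "f 0 = 0"
  shows "slope0 f holomorphic_on S"
proof -
  have "slope0 f = (\<lambda>z. if z = 0 then deriv f 0 else (f z - f 0) / (z - 0))"
    using assms(3) by (auto simp: slope0_def)
  then show ?thesis
    using pole_lemma_open[OF assms(1,2)] by simp
qed

lemma cesaro_integrand_holomorphic:
  assumes "f holomorphic_on ball 0 1" "f 0 = 0"
  shows "cesaro_integrand \<beta> f holomorphic_on ball 0 1"
  unfolding cesaro_integrand_def
  using one_minus_notin_nonpos_Reals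
  by (intro holomorphic_intros slope0_holomorphic assms holomorphic_on_powr)
     (auto simp: powr_def)

lemma has_contour_integral_cesaro:
  assumes "f holomorphic_on ball 0 1" "f 0 = 0" "z \<in> ball 0 1"
  shows "((\<lambda>w. f w / (w * (1 - w) powr complex_of_real \<beta>)) has_contour_integral
           contour_integral (linepath 0 z) (cesaro_integrand \<beta> f)) (linepath 0 z)"
proof -
  have "closed_segment 0 z \<subseteq> ball 0 1"
    using assms(3) by (meson centre_in_ball convex_ball convex_contains_segment zero_less_one)
  then have "continuous_on (closed_segment 0 z) (cesaro_integrand \<beta> f)"
    using cesaro_integrand_holomorphic[OF assms(1,2)]
    by (meson continuous_on_subset holomorphic_on_imp_continuous_on)
  then have "(cesaro_integrand \<beta> f has_contour_integral
               contour_integral (linepath 0 z) (cesaro_integrand \<beta> f)) (linepath 0 z)"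
    by (intro has_contour_integral_integral contour_integrable_continuous_linepath)
  then show ?thesis
    by (subst has_contour_integral_linepath_spike_start[where H = "cesaro_integrand \<beta> f"])
       (auto simp: cesaro_integrand_def slope0_def)
qed

lemma cesaro_eq_contour_integral:
  assumes "f holomorphic_on ball 0 1" "f 0 = 0" "z \<in> ball 0 1"
  shows "cesaro \<beta> f z = contour_integral (linepath 0 z) (cesaro_integrand \<beta> f)"
  unfolding cesaro_def using has_contour_integral_cesaro[OF assms] by (rule contour_integral_unique)

lemma has_field_derivative_cesaro:
  assumes "f holomorphic_on ball 0 1" "f 0 = 0" "z \<in> ball 0 1"
  shows "(cesaro \<beta> f has_field_derivative cesaro_integrand \<beta> f z) (at z)"
proof (rule has_field_derivative_transform_within_open)
  show "((\<lambda>x. contour_integral (linepath 0 x) (cesaro_integrand \<beta> f))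
          has_field_derivative cesaro_integrand \<beta> f z) (at z)"
    using cesaro_integrand_holomorphic[OF assms(1,2)] assms(3)
    by (intro holomorphic_convex_linepath_primitive) auto
  show "contour_integral (linepath 0 x) (cesaro_integrand \<beta> f) = cesaro \<beta> f x"
    if "x \<in> ball 0 1" for x
    using cesaro_eq_contour_integral[OF assms(1,2) that] by simp
qed (use assms(3) in auto)

lemma cesaro_holomorphic:
  assumes "f holomorphic_on ball 0 1" "f 0 = 0"
  shows "cesaro \<beta> f holomorphic_on ball 0 1"
  using has_field_derivative_cesaro[OF assms] by (meson holomorphic_on_open open_ball)

lemma cesaro_linear:
  assumes f: "f holomorphic_on ball 0 1" "f 0 = 0"
    and g: "g holomorphic_on ball 0 1" "g 0 = 0" and z: "z \<in> ball 0 1"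
  shows "cesaro \<beta> (\<lambda>w. a * f w + b * g w) z = a * cesaro \<beta> f z + b * cesaro \<beta> g z"
proof -
  let ?k = "\<lambda>w. w * (1 - w) powr complex_of_real \<beta>"
  have "((\<lambda>w. f w / ?k w) has_contour_integral cesaro \<beta> f z) (linepath 0 z)"
    using has_contour_integral_cesaro[OF f z, where \<beta> = \<beta>]
    by (simp add: cesaro_eq_contour_integral[OF f z])
  moreover have "((\<lambda>w. g w / ?k w) has_contour_integral cesaro \<beta> g z) (linepath 0 z)"
    using has_contour_integral_cesaro[OF g z, where \<beta> = \<beta>]
    by (simp add: cesaro_eq_contour_integral[OF g z])
  ultimately have "((\<lambda>w. a * (f w / ?k w) + b * (g w / ?k w))
      has_contour_integral (a * cesaro \<beta> f z + b * cesaro \<beta> g z)) (linepath 0 z)"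
    by (intro has_contour_integral_add has_contour_integral_lmul)
  then show ?thesis
    unfolding cesaro_def by (simp add: add_divide_distrib contour_integral_unique)
qed

lemma norm_deriv_le_of_bloch_bound:
  fixes \<alpha> N :: real and w :: complex
  assumes "0 \<le> \<alpha>" "cmod w < 1"
    and bnd: "(1 - (cmod w)^2) powr \<alpha> * cmod (deriv f w) \<le> N"
  shows "cmod (deriv f w) \<le> N * (1 - cmod w) powr (-\<alpha>)"
proof -
  have "(cmod w)^2 \<le> cmod w"
    using assms(2) by (simp add: power2_eq_square mult_left_le_one_le)
  then have "(1 - cmod w) powr \<alpha> \<le> (1 - (cmod w)^2) powr \<alpha>"
    using assms(1,2) by (intro powr_mono2) auto
  then have "(1 - cmod w) powr \<alpha> * cmod (deriv f w) \<le> N"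
    using bnd by (meson mult_right_mono norm_ge_zero order_trans)
  then have "cmod (deriv f w) \<le> N / (1 - cmod w) powr \<alpha>"
    using assms(2) by (simp add: pos_le_divide_eq mult.commute)
  then show ?thesis
    by (simp add: powr_minus_divide)
qed

lemma has_vector_derivative_radial:
  assumes "f holomorphic_on S" "open S" "of_real t * z \<in> S"
  shows "((\<lambda>t. f (of_real t * z)) has_vector_derivative deriv f (of_real t * z) * z) (at t)"
proof -
  have "((\<lambda>t. of_real t * z) has_vector_derivative z) (at t)"
    by (auto intro!: derivative_eq_intros)
  moreover have "(f has_field_derivative deriv f (of_real t * z)) (at (of_real t * z))"
    using assms by (intro holomorphic_derivI)
  ultimately show ?thesis
    using field_vector_diff_chain_at by (simp add: o_def mult.commute)
qed

lemma has_vector_derivative_radial_majorant: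
  fixes \<alpha> N r t :: real
  assumes "\<alpha> \<noteq> 1" "t * r < 1"
  shows "((\<lambda>t. N * (1 - (1 - t * r) powr (1 - \<alpha>)) / (1 - \<alpha>))
           has_vector_derivative N * r * (1 - t * r) powr (-\<alpha>)) (at t)"
proof -
  have "((\<lambda>t. N * (1 - (1 - t * r) powr (1 - \<alpha>)) / (1 - \<alpha>)) has_real_derivative
          N * ((1 - \<alpha>) * (1 - t * r) powr (1 - \<alpha> - 1) * r) / (1 - \<alpha>)) (at t)"
    using assms(2) by (auto intro!: derivative_eq_intros)
  then show ?thesis
    using assms(1) by (simp add: has_real_derivative_iff_has_vector_derivative ac_simps)
qed

lemma bloch_growth:
  fixes f :: "complex \<Rightarrow> complex" and \<alpha> N :: real
  assumes hol: "f holomorphic_on ball 0 1" and \<alpha>: "0 \<le> \<alpha>" "\<alpha> < 1"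
    and bnd: "\<And>w. w \<in> ball 0 1 \<Longrightarrow> (1 - (cmod w)^2) powr \<alpha> * cmod (deriv f w) \<le> N"
    and z: "cmod z < 1"
  shows "cmod (f z - f 0) \<le> N * cmod z / (1 - \<alpha>)"
proof -
  define r where "r = cmod z"
  have r: "0 \<le> r" "r < 1"
    using z by (auto simp: r_def)
  have tr: "0 \<le> t * r" "t * r < 1" "cmod (of_real t * z) = t * r" if "t \<in> {0..1}" for t
    using that r mult_left_le_one_le[of r t] by (auto simp: norm_mult r_def)
  define \<phi> where "\<phi> = (\<lambda>t. N * (1 - (1 - t * r) powr (1 - \<alpha>)) / (1 - \<alpha>))"
  have f': "((\<lambda>t. f (of_real t * z)) has_vector_derivative deriv f (of_real t * z) * z) (at t)"
    and \<phi>': "(\<phi> has_vector_derivative N * r * (1 - t * r) powr (-\<alpha>)) (at t)"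
    if "t \<in> {0..1}" for t
    using hol \<alpha> tr[OF that] unfolding \<phi>_def
    by (auto intro: has_vector_derivative_radial has_vector_derivative_radial_majorant)
  have "norm (f (of_real 1 * z) - f (of_real 0 * z)) \<le> \<phi> 1 - \<phi> 0"
  proof (rule differentiable_bound_general[OF zero_less_one])
    show "continuous_on {0..1} (\<lambda>t. f (of_real t * z))" "continuous_on {0..1} \<phi>"
      using f' \<phi>' by (meson continuous_at_imp_continuous_on has_vector_derivative_continuous)+
    show "norm (deriv f (of_real t * z) * z) \<le> N * r * (1 - t * r) powr (-\<alpha>)"
      if "0 < t" "t < 1" for t
    proof -
      have "cmod (deriv f (of_real t * z)) \<le> N * (1 - t * r) powr (-\<alpha>)"
        using norm_deriv_le_of_bloch_bound[OF \<alpha>(1) _ bnd, of "of_real t * z"] tr[of t] that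
        by simp
      then have "cmod (deriv f (of_real t * z)) * r \<le> N * (1 - t * r) powr (-\<alpha>) * r"
        using r(1) by (rule mult_right_mono)
      then show ?thesis
        by (simp add: norm_mult r_def[symmetric] ac_simps)
    qed
  qed (use f' \<phi>' in auto)
  also have "\<phi> 1 - \<phi> 0 \<le> N * r / (1 - \<alpha>)"
  proof -
    have "cmod (deriv f 0) \<le> N"
      using bnd[of 0] by simp
    moreover have "1 - r \<le> (1 - r) powr (1 - \<alpha>)"
      using powr_mono'[of "1 - \<alpha>" 1 "1 - r"] r \<alpha> by simp
    ultimately have "N * (1 - (1 - r) powr (1 - \<alpha>)) \<le> N * r"
      by (intro mult_left_mono) (auto intro: order_trans[OF norm_ge_zero])
    then show ?thesis
      using \<alpha> by (simp add: \<phi>_def divide_right_mono)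
  qed
  finally show ?thesis
    by (simp add: r_def)
qed

lemma norm_slope0_le:
  fixes \<alpha> N :: real
  assumes hol: "f holomorphic_on ball 0 1" and f0: "f 0 = 0" and \<alpha>: "0 \<le> \<alpha>" "\<alpha> < 1"
    and bnd: "\<And>w. w \<in> ball 0 1 \<Longrightarrow> (1 - (cmod w)^2) powr \<alpha> * cmod (deriv f w) \<le> N"
    and w: "w \<in> ball 0 1"
  shows "cmod (slope0 f w) \<le> N / (1 - \<alpha>)"
proof (cases "w = 0")
  case True
  have "cmod (deriv f 0) \<le> N"
    using bnd[of 0] by simp
  moreover have "N * (1 - \<alpha>) \<le> N"
    using \<open>cmod (deriv f 0) \<le> N\<close> \<alpha> by (intro mult_left_le) (auto intro: order_trans[OF norm_ge_zero])
  then have "N \<le> N / (1 - \<alpha>)"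
    using \<alpha> by (simp add: le_divide_eq)
  ultimately show ?thesis
    using True by (simp add: slope0_def)
next
  case False
  have "cmod (f w) \<le> N * cmod w / (1 - \<alpha>)"
    using bloch_growth[OF hol \<alpha> bnd, of w] w f0 by simp
  then have "cmod (f w) / cmod w \<le> N * cmod w / (1 - \<alpha>) / cmod w"
    by (rule divide_right_mono) simp
  then show ?thesis
    using False by (simp add: slope0_def norm_divide)
qed

lemma bloch_weight_le:
  fixes z :: complex and \<alpha> \<beta> :: real
  assumes "\<beta> \<le> \<alpha>" "0 \<le> \<alpha>" "cmod z < 1"
  shows "(1 - (cmod z)^2) powr \<alpha> / cmod (1 - z) powr \<beta> \<le> 2 powr (2 * \<alpha> - \<beta>)"
proof -
  have near: "1 - cmod z \<le> cmod (1 - z)"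
    using norm_triangle_ineq2[of 1 z] by simp
  have far: "cmod (1 - z) \<le> 2"
    using norm_triangle_ineq4[of 1 z] assms(3) by simp
  have pos: "0 < cmod (1 - z)"
    using near assms(3) by linarith
  have "1 - (cmod z)^2 = (1 - cmod z) * (1 + cmod z)"
    by (simp add: power2_eq_square algebra_simps)
  also have "\<dots> \<le> cmod (1 - z) * 2"
    using near assms(3) by (intro mult_mono) auto
  finally have "(1 - (cmod z)^2) powr \<alpha> \<le> (cmod (1 - z) * 2) powr \<alpha>"
    using assms(2,3) power_le_one[of "cmod z" 2] by (intro powr_mono2) auto
  then have "(1 - (cmod z)^2) powr \<alpha> / cmod (1 - z) powr \<beta>
      \<le> (cmod (1 - z) * 2) powr \<alpha> / cmod (1 - z) powr \<beta>"
    by (rule divide_right_mono) simp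
  also have "\<dots> = 2 powr \<alpha> * cmod (1 - z) powr (\<alpha> - \<beta>)"
    using pos by (simp add: powr_mult powr_diff)
  also have "\<dots> \<le> 2 powr \<alpha> * 2 powr (\<alpha> - \<beta>)"
    using far pos assms(1) by (intro mult_left_mono powr_mono2) auto
  also have "\<dots> = 2 powr (2 * \<alpha> - \<beta>)"
    by (simp add: powr_add[symmetric])
  finally show ?thesis .
qed

lemma bloch_norm_ge:
  assumes "f \<in> bloch \<alpha>" "w \<in> ball 0 1"
  shows "(1 - (cmod w)^2) powr \<alpha> * cmod (deriv f w) \<le> bloch_norm \<alpha> f"
  using assms unfolding bloch_def bloch_norm_def by (auto intro!: cSUP_upper)

lemma bloch_norm_le:
  assumes "\<And>z. z \<in> ball 0 1 \<Longrightarrow> (1 - (cmod z)^2) powr \<alpha> * cmod (deriv f z) \<le> M"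
  shows "bloch_norm \<alpha> f \<le> M"
  unfolding bloch_norm_def using assms by (intro cSUP_least) auto

lemma cesaro_bloch_pointwise:
  fixes \<alpha> \<beta> :: real
  assumes \<beta>: "\<beta> \<le> \<alpha>" and \<alpha>: "0 \<le> \<alpha>" "\<alpha> < 1" and f: "f \<in> bloch0 \<alpha>" and z: "z \<in> ball 0 1"
  shows "(1 - (cmod z)^2) powr \<alpha> * cmod (deriv (cesaro \<beta> f) z)
           \<le> 2 powr (2 * \<alpha> - \<beta>) / (1 - \<alpha>) * bloch_norm \<alpha> f"
proof -
  have hol: "f holomorphic_on ball 0 1" and f0: "f 0 = 0"
    using f by (auto simp: bloch0_def bloch_def)
  have slope: "cmod (slope0 f z) \<le> bloch_norm \<alpha> f / (1 - \<alpha>)"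
    using f bloch_norm_ge by (intro norm_slope0_le[OF hol f0 \<alpha> _ z]) (auto simp: bloch0_def)
  have "deriv (cesaro \<beta> f) z = slope0 f z / (1 - z) powr complex_of_real \<beta>"
    using has_field_derivative_cesaro[OF hol f0 z] by (simp add: DERIV_imp_deriv cesaro_integrand_def)
  then have "(1 - (cmod z)^2) powr \<alpha> * cmod (deriv (cesaro \<beta> f) z)
      = cmod (slope0 f z) * ((1 - (cmod z)^2) powr \<alpha> / cmod (1 - z) powr \<beta>)"
    by (simp add: norm_divide norm_powr_real_powr')
  also have "\<dots> \<le> bloch_norm \<alpha> f / (1 - \<alpha>) * 2 powr (2 * \<alpha> - \<beta>)"
    using slope bloch_weight_le[OF \<beta> \<alpha>(1), of z] z
    by (intro mult_mono) (auto intro: order_trans[OF norm_ge_zero])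
  finally show ?thesis
    by (simp add: mult.commute)
qed

theorem theorem2p2:
  fixes \<alpha> \<beta> :: real
  assumes "\<beta> \<le> \<alpha>" and "\<alpha> < 1" and "0 < \<alpha>"
  shows "(\<forall>f \<in> bloch0 \<alpha>. cesaro \<beta> f \<in> bloch0 \<alpha>)
    \<and> (\<forall>f \<in> bloch0 \<alpha>. \<forall>g \<in> bloch0 \<alpha>. \<forall>a b :: complex. \<forall>z \<in> ball 0 1.
          cesaro \<beta> (\<lambda>w. a * f w + b * g w) z = a * cesaro \<beta> f z + b * cesaro \<beta> g z)
    \<and> (\<exists>C::real. \<forall>f \<in> bloch0 \<alpha>. bloch_norm \<alpha> (cesaro \<beta> f) \<le> C * bloch_norm \<alpha> f)"
proof -
  define C where "C = 2 powr (2 * \<alpha> - \<beta>) / (1 - \<alpha>)"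
  have hol: "f holomorphic_on ball 0 1" "f 0 = 0" if "f \<in> bloch0 \<alpha>" for f
    using that by (auto simp: bloch0_def bloch_def)
  have bound: "(1 - (cmod z)^2) powr \<alpha> * cmod (deriv (cesaro \<beta> f) z) \<le> C * bloch_norm \<alpha> f"
    if "f \<in> bloch0 \<alpha>" "z \<in> ball 0 1" for f z
    unfolding C_def using assms that by (intro cesaro_bloch_pointwise) auto
  have "cesaro \<beta> f \<in> bloch0 \<alpha>" if "f \<in> bloch0 \<alpha>" for f
    using cesaro_holomorphic[OF hol[OF that]] bound[OF that]
    by (auto simp: bloch0_def bloch_def cesaro_def intro!: bdd_aboveI2)
  moreover have "bloch_norm \<alpha> (cesaro \<beta> f) \<le> C * bloch_norm \<alpha> f" if "f \<in> bloch0 \<alpha>" for f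
    using bound[OF that] by (rule bloch_norm_le)
  ultimately show ?thesis
    using cesaro_linear hol by blast
qed

end
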